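(* Let $N$ be a finite set and $h,s:2^N\to\mathbb{R}$. Define the convolution $(h*s)_A=\sum_{X\subseteq N}h_Xs_{A\setminus X}$ for $A\subseteq N$, the transform $\widehat{s}^{(1)}_B=\sum_{A\subseteq N,\,A\cap B=\emptyset}s_A$, and the transform $\widehat{s}^{(3)}_B=\sum_{A\subseteq B}(-1)^{|A|}s_A$ for $B\subseteq N$. Then for every $B\subseteq N$, $$\widehat{(h*s)}^{(3)}_B=\widehat{h}^{(1)}_B\,\widehat{s}^{(3)}_B.$$ *)

theory Defs
  imports Complex_Main
begin

text \<open>Set functions on the power set of a ground set N, represented as functions
 'a set \<Rightarrow> real (only values on subsets of N matter).\<close>

definition setconv :: "'a set \<Rightarrow> ('a set \<Rightarrow> real) \<Rightarrow> ('a set \<Rightarrow> real) \<Rightarrow> 'a set \<Rightarrow> real" where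
  "setconv N h s A = (\<Sum>X\<in>Pow N. h X * s (A - X))"

definition transf1 :: "'a set \<Rightarrow> ('a set \<Rightarrow> real) \<Rightarrow> 'a set \<Rightarrow> real" where
  "transf1 N s B = (\<Sum>A\<in>{A. A \<subseteq> N \<and> A \<inter> B = {}}. s A)"

definition transf3 :: "('a set \<Rightarrow> real) \<Rightarrow> 'a set \<Rightarrow> real" where
  "transf3 s B = (\<Sum>A\<in>Pow B. (-1) ^ card A * s A)"

end

theory Submission
  imports Defs
begin

text \<open>Exchanging the sums writes the left-hand side as the sum over \<open>X \<subseteq> N\<close> of \<open>h X\<close>
  times the alternating sum of \<open>s (A - X)\<close> over \<open>A \<subseteq> B\<close>. If \<open>X\<close> meets \<open>B\<close> in some \<open>x\<close>,
  adding \<open>x\<close> to \<open>A\<close> flips the sign but leaves \<open>A - X\<close> unchanged, so this inner sum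
  cancels in pairs; if \<open>X\<close> is disjoint from \<open>B\<close>, then \<open>A - X = A\<close> and it is the
  transform of \<open>s\<close> at \<open>B\<close>.\<close>

lemma sum_Pow_insert:
  assumes "finite C" and "x \<notin> C"
  shows "(\<Sum>A\<in>Pow (insert x C). f A) = (\<Sum>A\<in>Pow C. f A + f (insert x A))"
proof -
  have "inj_on (insert x) (Pow C)"
    using assms(2) by (intro inj_onI) (metis PowD insert_ident subsetD)
  moreover have "Pow C \<inter> insert x ` Pow C = {}"
    using assms(2) by auto
  ultimately show ?thesis
    using assms(1) by (simp add: Pow_insert sum.union_disjoint sum.reindex sum.distrib)
qed

lemma alternating_sum_Pow_diff_eq_0:
  fixes s :: "'a set \<Rightarrow> 'b::comm_ring_1"
  assumes "finite B" and "x \<in> B" and "x \<in> X"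
  shows "(\<Sum>A\<in>Pow B. (-1) ^ card A * s (A - X)) = 0"
proof -
  define C where "C = B - {x}"
  have B: "B = insert x C" and "x \<notin> C" and "finite C"
    using assms by (auto simp: C_def)
  have "(-1) ^ card (insert x A) * s (insert x A - X) = - ((-1) ^ card A * s (A - X))"
    if "A \<in> Pow C" for A
  proof -
    have "finite A" and "x \<notin> A"
      using that \<open>finite C\<close> \<open>x \<notin> C\<close> finite_subset by auto
    moreover have "insert x A - X = A - X"
      using assms(3) by auto
    ultimately show ?thesis
      by simp
  qed
  then show ?thesis
    unfolding B by (simp add: sum_Pow_insert \<open>finite C\<close> \<open>x \<notin> C\<close>)
qed

lemma transf3_diff:
  assumes "finite B"
  shows "(\<Sum>A\<in>Pow B. (-1) ^ card A * s (A - X)) = (if X \<inter> B = {} then transf3 s B else 0)"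
proof (cases "X \<inter> B = {}")
  case True
  then have "A - X = A" if "A \<in> Pow B" for A
    using that by blast
  then show ?thesis
    using True by (simp add: transf3_def)
next
  case False
  then show ?thesis
    using alternating_sum_Pow_diff_eq_0[OF assms] by auto
qed

theorem mainTheorem8:
  fixes N :: "'a set" and h s :: "'a set \<Rightarrow> real" and B :: "'a set"
  assumes "finite N" and "B \<subseteq> N"
  shows "transf3 (setconv N h s) B = transf1 N h B * transf3 s B"
proof -
  have "finite B"
    using assms finite_subset by auto
  have "transf3 (setconv N h s) B = (\<Sum>X\<in>Pow N. h X * (\<Sum>A\<in>Pow B. (-1) ^ card A * s (A - X)))"
    unfolding transf3_def setconv_def sum_distrib_left
    by (subst sum.swap) (simp add: mult.left_commute)
  also have "\<dots> = (\<Sum>X\<in>Pow N. if X \<inter> B = {} then h X * transf3 s B else 0)"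
    by (intro sum.cong) (simp_all add: transf3_diff \<open>finite B\<close>)
  also have "\<dots> = (\<Sum>X\<in>{X \<in> Pow N. X \<inter> B = {}}. h X * transf3 s B)"
    using sum.inter_filter[of "Pow N" "\<lambda>X. h X * transf3 s B" "\<lambda>X. X \<inter> B = {}"] assms(1)
    by simp
  also have "\<dots> = transf1 N h B * transf3 s B"
    by (simp add: transf1_def sum_distrib_right)
  finally show ?thesis .
qed

end
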